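(* Let $\nu\in M_0(\mathbb D^* )$ and let $W$ be a M\"obius transformation of $\widehat{\mathbb C}$ such that $W\circ F_\nu$ is holomorphic on $\mathbb D$. If $\Phi=\log(W\circ F_\nu)'$ belongs to $B_0(\mathbb D)$, then $W\circ F_\nu$ maps $\mathbb D$ onto a bounded domain in $\mathbb C$.
   Context: $\mathbb D$ is the unit disk, $\widehat{\mathbb C}=\mathbb C\cup\{\infty\}$, $\mathbb D^*=\widehat{\mathbb C}\setminus\overline{\mathbb D}$. $M(\mathbb D^* )=\{\mu\in L^\infty(\mathbb D^* ):\|\mu\|_\infty<1\}$, and $M_0(\mathbb D^* )=\{\mu\in M(\mathbb D^* ):\lim_{t\to0}\operatorname{ess\,sup}_{|z|<1+t}|\mu(z)|=0\}$ (asymptotically conformal Beltrami coefficients). For $\mu\in M(\mathbb D^* )$, $F_\mu$ is the unique conformal homeomorphism of $\mathbb D$ onto a bounded domain in $\mathbb C$ with $F_\mu(0)=0$, $F_\mu'(0)=1$, extending to a quasiconformal self-homeomorphism of $\widehat{\mathbb C}$ with $F_\mu(\infty)=\infty$ and complex dilatation $\mu$ on $\mathbb D^*$. $B_0(\mathbb D)$ (little Bloch space) is the space of holomorphic $\Phi$ on $\mathbb D$ with $\sup_{z\in\mathbb D}(1-|z|^2)|\Phi'(z)|<\infty$ and $\lim_{t\to0}\sup_{|z|>1-t}(1-|z|^2)|\Phi'(z)|=0$ (functions differing by constants identified). *)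

theory Defs
  imports "HOL-Analysis.Analysis"
begin

text \<open>Unit disk D = ball 0 1; exterior D* = {z. 1 < cmod z} (the point at infinity is a null set).\<close>

definition beltrami_ext :: "(complex \<Rightarrow> complex) \<Rightarrow> bool" where
  "beltrami_ext \<mu> \<longleftrightarrow>
     \<mu> \<in> borel_measurable (restrict_space lebesgue {z. 1 < cmod z}) \<and>
     (\<exists>k<1. AE z in lebesgue. 1 < cmod z \<longrightarrow> cmod (\<mu> z) \<le> k)"

definition asympt_conformal :: "(complex \<Rightarrow> complex) \<Rightarrow> bool" where
  "asympt_conformal \<mu> \<longleftrightarrow> beltrami_ext \<mu> \<and>
     (\<forall>\<epsilon>>0. \<exists>t>0. AE z in lebesgue. 1 < cmod z \<and> cmod z < 1 + t \<longrightarrow> cmod (\<mu> z) \<le> \<epsilon>)"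

definition abs_cont_on :: "real \<Rightarrow> real \<Rightarrow> (real \<Rightarrow> complex) \<Rightarrow> bool" where
  "abs_cont_on a b f \<longleftrightarrow>
     (\<forall>\<epsilon>>0. \<exists>\<delta>>0. \<forall>(n::nat) (I :: nat \<Rightarrow> real \<times> real).
        (\<forall>k<n. a \<le> fst (I k) \<and> fst (I k) \<le> snd (I k) \<and> snd (I k) \<le> b) \<and>
        (\<forall>j<n. \<forall>k<n. j \<noteq> k \<longrightarrow> snd (I j) \<le> fst (I k) \<or> snd (I k) \<le> fst (I j)) \<and>
        (\<Sum>k<n. snd (I k) - fst (I k)) < \<delta>
        \<longrightarrow> (\<Sum>k<n. cmod (f (snd (I k)) - f (fst (I k)))) < \<epsilon>)"

definition ACL :: "(complex \<Rightarrow> complex) \<Rightarrow> bool" where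
  "ACL F \<longleftrightarrow>
     (AE y in lborel. \<forall>a b. abs_cont_on a b (\<lambda>x. F (Complex x y))) \<and>
     (AE x in lborel. \<forall>a b. abs_cont_on a b (\<lambda>y. F (Complex x y)))"

text \<open>F is a quasiconformal self-homeomorphism of the plane (hence of the sphere, fixing
  infinity) whose complex dilatation equals mu a.e. on D*: analytic definition
  (homeomorphism, ACL, Beltrami equation a.e. with Wirtinger derivatives
  F_zbar = (L 1 + i L i)/2, F_z = (L 1 - i L i)/2 of the real derivative L).\<close>
definition qc_dilatation_ext :: "(complex \<Rightarrow> complex) \<Rightarrow> (complex \<Rightarrow> complex) \<Rightarrow> bool" where
  "qc_dilatation_ext \<mu> F \<longleftrightarrow>
     (\<exists>G. homeomorphism UNIV UNIV F G) \<and> ACL F \<and>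
     (AE z in lebesgue. 1 < cmod z \<longrightarrow>
        (\<exists>L. (F has_derivative L) (at z) \<and>
             (L 1 + \<i> * L \<i>) / 2 = \<mu> z * ((L 1 - \<i> * L \<i>) / 2)))"

definition is_F :: "(complex \<Rightarrow> complex) \<Rightarrow> (complex \<Rightarrow> complex) \<Rightarrow> bool" where
  "is_F \<mu> F \<longleftrightarrow>
     F holomorphic_on ball 0 1 \<and> inj_on F (ball 0 1) \<and> bounded (F ` ball 0 1) \<and>
     F 0 = 0 \<and> deriv F 0 = 1 \<and> qc_dilatation_ext \<mu> F"

text \<open>Moebius transformation (restricted to the finite plane).\<close>
definition moebius :: "complex \<Rightarrow> complex \<Rightarrow> complex \<Rightarrow> complex \<Rightarrow> complex \<Rightarrow> complex" where
  "moebius a b c d z = (a * z + b) / (c * z + d)"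

definition little_bloch :: "(complex \<Rightarrow> complex) \<Rightarrow> bool" where
  "little_bloch \<Phi> \<longleftrightarrow> \<Phi> holomorphic_on ball 0 1 \<and>
     (\<exists>C. \<forall>z\<in>ball 0 1. (1 - (cmod z)\<^sup>2) * cmod (deriv \<Phi> z) \<le> C) \<and>
     (\<forall>\<epsilon>>0. \<exists>t>0. \<forall>z. 1 - t < cmod z \<and> cmod z < 1 \<longrightarrow>
        (1 - (cmod z)\<^sup>2) * cmod (deriv \<Phi> z) \<le> \<epsilon>)"

end

theory Submission
  imports Defs
begin

text \<open>Since \<open>\<Phi> = log f'\<close> lies in the little Bloch space, \<open>(1 - |z|) |\<Phi>'(z)| \<le> 1/2\<close> near the
  unit circle. Integrating along radii gives \<open>|\<Phi>(z)| \<le> C - log (1 - |z|) / 2\<close>, hence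
  \<open>|f'(z)| \<le> e\<^sup>C / sqrt (1 - |z|)\<close>. This bound is integrable along every radius, so \<open>f\<close> is
  bounded.\<close>

lemma radial_increment_le:
  fixes g :: "complex \<Rightarrow> complex" and \<phi> \<phi>' :: "real \<Rightarrow> real"
  assumes g: "g holomorphic_on ball 0 1" and u: "norm u = 1"
    and \<rho>r: "0 \<le> \<rho>" "\<rho> < r" "r < 1"
    and d\<phi>: "\<And>s. \<rho> \<le> s \<Longrightarrow> s \<le> r \<Longrightarrow> (\<phi> has_real_derivative \<phi>' s) (at s)"
    and bound: "\<And>s. \<rho> < s \<Longrightarrow> s < r \<Longrightarrow> norm (deriv g (of_real s * u)) \<le> \<phi>' s"
  shows "norm (g (of_real r * u) - g (of_real \<rho> * u)) \<le> \<phi> r - \<phi> \<rho>"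
proof -
  have dg: "((\<lambda>s. g (of_real s * u)) has_vector_derivative (u * deriv g (of_real s * u))) (at s)"
    if "\<rho> \<le> s" "s \<le> r" for s
  proof -
    have "of_real s * u \<in> ball 0 1"
      using that \<rho>r u by (simp add: norm_mult)
    then have "(g has_field_derivative deriv g (of_real s * u)) (at (of_real s * u))"
      using g by (meson holomorphic_derivI open_ball)
    moreover have "((\<lambda>x. of_real x * u) has_vector_derivative u) (at s)"
      by (rule has_vector_derivative_real_field) (auto intro!: derivative_eq_intros)
    ultimately show ?thesis
      using field_vector_diff_chain_at by (fastforce simp: o_def)
  qed
  show ?thesis
  proof (rule differentiable_bound_general[OF \<rho>r(2),
        where f' = "\<lambda>s. u * deriv g (of_real s * u)" and \<phi>' = \<phi>'])
    show "continuous_on {\<rho>..r} (\<lambda>s. g (of_real s * u))"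
      using dg[THEN has_vector_derivative_continuous]
      by (intro continuous_at_imp_continuous_on ballI) auto
    show "continuous_on {\<rho>..r} \<phi>"
      using d\<phi>[THEN DERIV_isCont]
      by (intro continuous_at_imp_continuous_on ballI) auto
    show "(\<phi> has_vector_derivative \<phi>' s) (at s)" if "\<rho> < s" "s < r" for s
      using d\<phi> that by (simp add: has_real_derivative_iff_has_vector_derivative)
    show "norm (u * deriv g (of_real s * u)) \<le> \<phi>' s" if "\<rho> < s" "s < r" for s
      using bound that u by (simp add: norm_mult)
    show "((\<lambda>s. g (of_real s * u)) has_vector_derivative u * deriv g (of_real s * u)) (at s)"
      if "\<rho> < s" "s < r" for s
      using dg that by simp
  qed
qed

lemma polar_decomposition_outside_cball:
  fixes z :: complex
  assumes "0 \<le> \<rho>" "\<rho> < norm z"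
  obtains u where "norm u = 1" "z = of_real (norm z) * u" "of_real \<rho> * u \<in> cball 0 \<rho>"
proof
  have "z \<noteq> 0" using assms by auto
  then show "norm (z / of_real (norm z)) = 1" "z = of_real (norm z) * (z / of_real (norm z))"
    by (simp_all add: norm_divide)
  then show "of_real \<rho> * (z / of_real (norm z)) \<in> cball 0 \<rho>"
    using assms by (simp add: norm_mult norm_divide)
qed

lemma little_bloch_deriv_le_near_circle:
  assumes "little_bloch \<Phi>"
  obtains \<rho> where "0 < \<rho>" "\<rho> < 1"
    "\<And>z. \<rho> < norm z \<Longrightarrow> norm z < 1 \<Longrightarrow> norm (deriv \<Phi> z) \<le> 1 / (2 * (1 - norm z))"
proof -
  obtain t where "t > 0" and small: "\<And>z. 1 - t < norm z \<Longrightarrow> norm z < 1 \<Longrightarrow>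
      (1 - (norm z)\<^sup>2) * norm (deriv \<Phi> z) \<le> 1/2"
    using assms unfolding little_bloch_def by (meson half_gt_zero zero_less_one)
  define \<rho> where "\<rho> = max (1/2) (1 - t/2)"
  have \<rho>: "0 < \<rho>" "\<rho> < 1" "1 - t < \<rho>"
    using \<open>t > 0\<close> by (auto simp: \<rho>_def)
  have "norm (deriv \<Phi> z) \<le> 1 / (2 * (1 - norm z))" if z: "\<rho> < norm z" "norm z < 1" for z
  proof -
    have "1 - norm z \<le> 1 - (norm z)\<^sup>2"
      using z \<rho> by (simp add: power2_eq_square mult_left_le_one_le)
    then have "(1 - norm z) * norm (deriv \<Phi> z) \<le> 1/2"
      using small[of z] z \<rho> by (meson mult_right_mono norm_ge_zero order_trans less_trans)
    then show ?thesis
      using z by (simp add: field_simps)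
  qed
  with \<rho> show thesis by (intro that) auto
qed

lemma little_bloch_log_growth:
  assumes "little_bloch \<Phi>"
  obtains \<rho> C where "0 < \<rho>" "\<rho> < 1"
    "\<And>z. \<rho> < norm z \<Longrightarrow> norm z < 1 \<Longrightarrow> norm (\<Phi> z) \<le> C - ln (1 - norm z) / 2"
proof -
  have hol: "\<Phi> holomorphic_on ball 0 1"
    using assms unfolding little_bloch_def by blast
  obtain \<rho> where \<rho>: "0 < \<rho>" "\<rho> < 1"
    and deriv_le: "\<And>z. \<rho> < norm z \<Longrightarrow> norm z < 1 \<Longrightarrow> norm (deriv \<Phi> z) \<le> 1 / (2 * (1 - norm z))"
    using little_bloch_deriv_le_near_circle assms by blast
  have cont: "continuous_on (cball 0 \<rho>) \<Phi>"
    using hol \<rho> holomorphic_on_imp_continuous_on continuous_on_subset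
    by (metis mem_ball_0 mem_cball_0 order.strict_trans1 subsetI)
  obtain B where B: "\<And>z. z \<in> cball 0 \<rho> \<Longrightarrow> norm (\<Phi> z) \<le> B"
    using compact_imp_bounded[OF compact_continuous_image[OF cont compact_cball]]
    unfolding bounded_iff by blast
  have "norm (\<Phi> z) \<le> (B + ln (1 - \<rho>) / 2) - ln (1 - norm z) / 2"
    if z: "\<rho> < norm z" "norm z < 1" for z
  proof -
    obtain u where u: "norm u = 1" "z = of_real (norm z) * u" "of_real \<rho> * u \<in> cball 0 \<rho>"
      using polar_decomposition_outside_cball \<rho>(1) z(1) by (metis less_imp_le)
    have "norm (\<Phi> (of_real (norm z) * u) - \<Phi> (of_real \<rho> * u))
        \<le> - ln (1 - norm z) / 2 - - ln (1 - \<rho>) / 2"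
    proof (rule radial_increment_le[OF hol u(1) _ z(1,2), where \<phi>' = "\<lambda>s. 1 / (2 * (1 - s))"])
      show "((\<lambda>s. - ln (1 - s) / 2) has_real_derivative 1 / (2 * (1 - s))) (at s)"
        if "\<rho> \<le> s" "s \<le> norm z" for s
        using that z by (auto intro!: derivative_eq_intros simp: field_simps)
      show "norm (deriv \<Phi> (of_real s * u)) \<le> 1 / (2 * (1 - s))" if "\<rho> < s" "s < norm z" for s
        using deriv_le[of "of_real s * u"] that z \<rho> u by (simp add: norm_mult)
    qed (use \<rho> in auto)
    then show ?thesis
      using B[OF u(3)] norm_triangle_sub[of "\<Phi> z" "\<Phi> (of_real \<rho> * u)"] u(2) by simp
  qed
  with \<rho> show thesis by (intro that) auto
qed

lemma bounded_image_if_deriv_le_inverse_sqrt: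
  fixes f :: "complex \<Rightarrow> complex"
  assumes f: "f holomorphic_on ball 0 1" and \<rho>: "0 \<le> \<rho>" "\<rho> < 1" and "0 \<le> K"
    and deriv_le: "\<And>z. \<rho> < norm z \<Longrightarrow> norm z < 1 \<Longrightarrow> norm (deriv f z) \<le> K / sqrt (1 - norm z)"
  shows "bounded (f ` ball 0 1)"
proof -
  have cont: "continuous_on (cball 0 \<rho>) f"
    using f \<rho> holomorphic_on_imp_continuous_on continuous_on_subset
    by (metis mem_ball_0 mem_cball_0 order.strict_trans1 subsetI)
  obtain A where A: "\<And>z. z \<in> cball 0 \<rho> \<Longrightarrow> norm (f z) \<le> A"
    using compact_imp_bounded[OF compact_continuous_image[OF cont compact_cball]]
    unfolding bounded_iff by blast
  have "norm (f z) \<le> A + 2 * K" if z: "\<rho> < norm z" "norm z < 1" for z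
  proof -
    obtain u where u: "norm u = 1" "z = of_real (norm z) * u" "of_real \<rho> * u \<in> cball 0 \<rho>"
      using polar_decomposition_outside_cball \<rho>(1) z(1) by blast
    have "norm (f (of_real (norm z) * u) - f (of_real \<rho> * u))
        \<le> - 2 * K * sqrt (1 - norm z) - - 2 * K * sqrt (1 - \<rho>)"
    proof (rule radial_increment_le[OF f u(1) \<rho>(1) z(1,2), where \<phi>' = "\<lambda>s. K / sqrt (1 - s)"])
      show "((\<lambda>s. - 2 * K * sqrt (1 - s)) has_real_derivative K / sqrt (1 - s)) (at s)"
        if "\<rho> \<le> s" "s \<le> norm z" for s
        using that z by (auto intro!: derivative_eq_intros simp: field_simps)
      show "norm (deriv f (of_real s * u)) \<le> K / sqrt (1 - s)" if "\<rho> < s" "s < norm z" for s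
        using deriv_le[of "of_real s * u"] that z \<rho> u by (simp add: norm_mult)
    qed
    also have "\<dots> \<le> 2 * K"
    proof -
      have "2 * K * sqrt (1 - \<rho>) \<le> 2 * K"
        using \<rho> \<open>0 \<le> K\<close> by (simp add: mult_left_le)
      moreover have "0 \<le> 2 * K * sqrt (1 - norm z)"
        using z \<open>0 \<le> K\<close> by simp
      ultimately show ?thesis
        by linarith
    qed
    finally show ?thesis
      using A[OF u(3)] norm_triangle_sub[of "f z" "f (of_real \<rho> * u)"] u(2) by simp
  qed
  then have "\<forall>z\<in>ball 0 1. norm (f z) \<le> A + 2 * K"
    using A \<open>0 \<le> K\<close> by (metis add_increasing2 mem_ball_0 mem_cball_0 mult_nonneg_nonneg
        not_le zero_le_numeral)
  then show ?thesis
    unfolding bounded_iff by blast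
qed

lemma bounded_image_if_log_deriv_little_bloch:
  fixes f \<Phi> :: "complex \<Rightarrow> complex"
  assumes f: "f holomorphic_on ball 0 1"
    and exp_\<Phi>: "\<forall>z\<in>ball 0 1. exp (\<Phi> z) = deriv f z"
    and "little_bloch \<Phi>"
  shows "bounded (f ` ball 0 1)"
proof -
  obtain \<rho> C where \<rho>: "0 < \<rho>" "\<rho> < 1"
    and growth: "\<And>z. \<rho> < norm z \<Longrightarrow> norm z < 1 \<Longrightarrow> norm (\<Phi> z) \<le> C - ln (1 - norm z) / 2"
    using little_bloch_log_growth \<open>little_bloch \<Phi>\<close> by blast
  have "norm (deriv f z) \<le> exp C / sqrt (1 - norm z)" if z: "\<rho> < norm z" "norm z < 1" for z
  proof -
    have "norm (deriv f z) = exp (Re (\<Phi> z))"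
      using exp_\<Phi> z by (metis mem_ball_0 norm_exp_eq_Re)
    also have "\<dots> \<le> exp (C - ln (1 - norm z) / 2)"
      using growth[OF z] complex_Re_le_cmod[of "\<Phi> z"] by simp
    also have "\<dots> = exp C / sqrt (1 - norm z)"
      using z by (simp add: exp_diff powr_half_sqrt[symmetric] powr_def)
    finally show ?thesis .
  qed
  then show ?thesis
    using bounded_image_if_deriv_le_inverse_sqrt[OF f less_imp_le[OF \<rho>(1)] \<rho>(2) exp_ge_zero]
    by blast
qed

theorem lemma3p3:
  fixes \<nu> F \<Phi> :: "complex \<Rightarrow> complex" and a b c d :: complex
  assumes "asympt_conformal \<nu>"
    and "is_F \<nu> F"
    and "a * d - b * c \<noteq> 0"
    and "(\<lambda>z. moebius a b c d (F z)) holomorphic_on ball 0 1"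
    and "\<Phi> holomorphic_on ball 0 1"
    and "\<forall>z\<in>ball 0 1. exp (\<Phi> z) = deriv (\<lambda>w. moebius a b c d (F w)) z"
    and "little_bloch \<Phi>"
  shows "bounded ((\<lambda>z. moebius a b c d (F z)) ` ball 0 1)"
  using bounded_image_if_log_deriv_little_bloch assms(4,6,7) .

end
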